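(* Let $q$ be a power of an odd prime $p$ with $q>5$, let $3\le h\le k$ be integers, let $$D_3=\Bigl\{(x_1,\ldots,x_k)\in\mathbb{F}_q^k\setminus\{0\}:\prod_{i=1}^h x_i\prod_{1\le i<j\le h}(x_i+x_j)=0\Bigr\},$$ and $n=\#D_3$. Then the minimum nonzero weight of $\mathrm{C}_{D_3}$ is $n-q^{k-1}+1$, and it is attained exactly by the codewords associated with the hyperplanes $x_i+x_j=0$ ($1\le i<j\le h$) and $x_i=0$ ($1\le i\le h$).
   Context: For a finite ordered set $D=\{P_1,\ldots,P_n\}\subseteq\mathbb{F}_q^k$, $\mathrm{C}_D=\{c_f=(f(P_1),\ldots,f(P_n)):f:\mathbb{F}_q^k\to\mathbb{F}_q\text{ linear}\}$; the codewords associated with a hyperplane through the origin are the $c_f$ with $f$ a linear form defining it. Weights are Hamming weights. *)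

theory Defs
  imports "HOL-Computational_Algebra.Primes"
begin

text \<open>Vectors of F_q^k are modelled as functions nat => 'a vanishing outside
  the index range {0..<k} (coordinates x_1..x_k of the paper are x 0 .. x (k-1)).\<close>
definition vecs :: "nat \<Rightarrow> (nat \<Rightarrow> 'a::zero) set" where
  "vecs k = {x. \<forall>i\<ge>k. x i = 0}"

text \<open>The linear form F_q^k -> F_q with coefficient vector a
  (every linear form on F_q^k is of this shape, for a unique a in vecs k).\<close>
definition linform :: "nat \<Rightarrow> (nat \<Rightarrow> 'a::comm_ring_1) \<Rightarrow> (nat \<Rightarrow> 'a) \<Rightarrow> 'a" where
  "linform k a x = (\<Sum>i<k. a i * x i)"

definition D3 :: "nat \<Rightarrow> nat \<Rightarrow> (nat \<Rightarrow> 'a::comm_ring_1) set" where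
  "D3 k h = {x \<in> vecs k. x \<noteq> (\<lambda>_. 0) \<and>
     (\<Prod>i<h. x i) * (\<Prod>i<h. \<Prod>j\<in>{i<..<h}. (x i + x j)) = 0}"

text \<open>Hamming weight of the codeword c_f = (f(P_1),...,f(P_n)) of C_D.\<close>
definition cw_weight :: "('b \<Rightarrow> 'a::zero) \<Rightarrow> 'b set \<Rightarrow> nat" where
  "cw_weight f D = card {P \<in> D. f P \<noteq> 0}"

end

theory Submission
  imports Defs "HOL-Library.Cardinality" "HOL-Number_Theory.Residues"
begin

text \<open>
  Together with 0, the set D3 is the intersection U of F_q^k with the union of the hyperplanes
  x_i = 0 and x_i + x_j = 0 (i < j < h). The weight of c_f counts the points of U - {0} outside
  ker f, so it equals n + 1 - |U \<inter> ker f|. For f \<noteq> 0 the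
  kernel has q^(k-1) points, hence the weight is at least n - q^(k-1) + 1, with equality iff
  ker f \<subseteq> U. This inclusion holds when ker f is one of the hyperplanes above. Otherwise one
  exhibits a point of ker f off the union: set all coordinates to 1 (one of them possibly to some
  d \<notin> {0, 1, -1}) and move two coordinates t, u along a line inside ker f. Along that line at most
  six values are forbidden, which is where q \<ge> 7 and odd characteristic enter.
\<close>

lemma card_vecs: "card (vecs k :: (nat \<Rightarrow> 'a::{zero,finite}) set) = CARD('a) ^ k"
  and finite_vecs [simp]: "finite (vecs k :: (nat \<Rightarrow> 'a::{zero,finite}) set)"
proof -
  have bij: "bij_betw (\<lambda>x. restrict x {..<k}) (vecs k) ({..<k} \<rightarrow>\<^sub>E (UNIV :: 'a set))"
    by (rule bij_betw_byWitness[where f' = "\<lambda>f i. if i < k then f i else 0"])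
       (auto simp: vecs_def fun_eq_iff PiE_def extensional_def)
  show "card (vecs k :: (nat \<Rightarrow> 'a) set) = CARD('a) ^ k"
    using bij_betw_same_card[OF bij] by (simp add: card_PiE)
  show "finite (vecs k :: (nat \<Rightarrow> 'a) set)"
    using bij_betw_finite[OF bij] by (simp add: finite_PiE)
qed

lemma linform_add_scaled:
  "linform k a (\<lambda>i. x i + c * v i) = linform k a x + c * linform k a v"
  "linform k a (\<lambda>i. x i - c * v i) = linform k a x - c * linform k a v"
  by (simp_all add: linform_def sum.distrib sum_subtractf sum_distrib_left algebra_simps)

lemma linform_fun_upd:
  assumes "t < k"
  shows "linform k a (x(t := c)) = linform k a (x(t := 0)) + a t * c"
proof -
  have "linform k a (x(t := c)) = a t * c + (\<Sum>i\<in>{..<k} - {t}. a i * x i)"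
    and "linform k a (x(t := 0)) = (\<Sum>i\<in>{..<k} - {t}. a i * x i)"
    using assms by (simp_all add: linform_def sum.remove[of "{..<k}" t])
  then show ?thesis by simp
qed

lemma linform_eq_sum_over:
  assumes "{i. i < k \<and> a i \<noteq> 0} \<subseteq> S" "S \<subseteq> {..<k}"
  shows "linform k a x = (\<Sum>i\<in>S. a i * x i)"
  unfolding linform_def using assms by (intro sum.mono_neutral_right) auto

definition ker_linform :: "nat \<Rightarrow> (nat \<Rightarrow> 'a::comm_ring_1) \<Rightarrow> (nat \<Rightarrow> 'a) set" where
  "ker_linform k a = {x \<in> vecs k. linform k a x = 0}"

lemma card_ker_linform:
  fixes a :: "nat \<Rightarrow> 'a::{field,finite}"
  assumes "t < k" "a t \<noteq> 0"
  shows "card (ker_linform k a) = CARD('a) ^ (k - 1)"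
proof -
  define v :: "nat \<Rightarrow> 'a" where "v = (\<lambda>_. 0)(t := 1 / a t)"
  have v: "v \<in> vecs k" "linform k a v = 1"
    using assms linform_fun_upd[of t k a "\<lambda>_. 0" "1 / a t"]
    by (auto simp: v_def vecs_def linform_def)
  have "bij_betw (\<lambda>x. ((\<lambda>i. x i - linform k a x * v i), linform k a x))
          (vecs k) (ker_linform k a \<times> UNIV)"
    by (rule bij_betw_byWitness[where f' = "\<lambda>(y, c) i. y i + c * v i"])
       (use v in \<open>auto simp: ker_linform_def linform_add_scaled vecs_def\<close>)
  then have "card (vecs k :: (nat \<Rightarrow> 'a) set) = card (ker_linform k a \<times> (UNIV :: 'a set))"
    by (rule bij_betw_same_card)
  then have "CARD('a) ^ k = card (ker_linform k a) * CARD('a)"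
    by (simp add: card_vecs card_cartesian_product)
  moreover have "CARD('a) ^ k = CARD('a) ^ (k - 1) * CARD('a)"
    using assms by (cases k) auto
  ultimately show ?thesis by simp
qed

lemma two_neq_zero_if_odd_card:
  assumes "odd CARD('a::ring_1)"
  shows "(2::'a) \<noteq> 0"
proof
  assume "(2::'a) = 0"
  then have "CHAR('a) dvd 2"
    using of_nat_eq_0_iff_char_dvd[where 'a = 'a, of 2] by simp
  then have "CHAR('a) = 2"
    using two_is_prime_nat CHAR_not_1 by (auto simp: prime_nat_iff)
  then show False
    using assms CHAR_dvd_CARD[where 'a = 'a] by simp
qed

definition arrangement :: "nat \<Rightarrow> (nat \<Rightarrow> 'a::comm_ring_1) set" where
  "arrangement h = {x. (\<exists>i<h. x i = 0) \<or> (\<exists>i j. i < j \<and> j < h \<and> x i + x j = 0)}"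

lemma D3_eq_arrangement:
  "D3 k h = (vecs k \<inter> arrangement h :: (nat \<Rightarrow> 'a::idom) set) - {\<lambda>_. 0}"
  by (auto simp: D3_def arrangement_def)

lemma notin_arrangement_if_values:
  assumes "\<forall>i<h. x i \<in> V" "V \<inter> uminus ` V = {}"
  shows "x \<notin> arrangement h"
proof -
  have "v + w \<noteq> 0" if "v \<in> V" "w \<in> V" for v w
    using that assms(2) by (auto simp: add_eq_0_iff)
  then show ?thesis
    using assms(1) add_0[of "0 :: 'a"] by (fastforce simp: arrangement_def)
qed

lemma insert_disjoint_uminus_iff:
  fixes y :: "'a::ab_group_add"
  shows "insert y V \<inter> uminus ` insert y V = {} \<longleftrightarrow>
         V \<inter> uminus ` V = {} \<and> y + y \<noteq> 0 \<and> y \<notin> uminus ` V"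
  by (auto simp: add_eq_0_iff image_iff minus_equation_iff)

lemma cw_weight_D3:
  fixes a :: "nat \<Rightarrow> 'a::{idom,finite}"
  assumes "0 < h"
  shows "int (cw_weight (linform k a) (D3 k h)) =
    int (card (D3 k h :: (nat \<Rightarrow> 'a) set)) + 1 - int (card (ker_linform k a \<inter> arrangement h))"
proof -
  define U :: "(nat \<Rightarrow> 'a) set" where "U = vecs k \<inter> arrangement h"
  define Z where "Z = ker_linform k a \<inter> arrangement h"
  have zero: "(\<lambda>_. 0) \<in> Z"
    using assms by (auto simp: Z_def ker_linform_def linform_def vecs_def arrangement_def)
  have "Z \<subseteq> U" "finite U"
    by (auto simp: Z_def U_def ker_linform_def intro: finite_subset[OF _ finite_vecs])
  have "{P \<in> D3 k h. linform k a P \<noteq> 0} = U - Z"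
    using zero by (auto simp: D3_eq_arrangement U_def Z_def ker_linform_def)
  then have "cw_weight (linform k a) (D3 k h) = card U - card Z"
    using \<open>Z \<subseteq> U\<close> \<open>finite U\<close> by (simp add: cw_weight_def card_Diff_subset finite_subset)
  moreover have "card (D3 k h :: (nat \<Rightarrow> 'a) set) = card U - 1"
    using zero \<open>Z \<subseteq> U\<close> by (simp add: D3_eq_arrangement card_Diff_singleton subsetD flip: U_def)
  moreover have "card Z \<le> card U" "1 \<le> card Z"
    using zero \<open>Z \<subseteq> U\<close> \<open>finite U\<close> by (auto intro: card_mono Suc_leI simp: card_gt_0_iff finite_subset)
  ultimately show ?thesis
    unfolding Z_def by linarith
qed

lemma fun_upd_solve_mem_ker_linform:
  fixes a b :: "nat \<Rightarrow> 'a::field"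
  assumes "b \<in> vecs k" "t < k" "a t \<noteq> 0"
  shows "b(t := - linform k a (b(t := 0)) / a t) \<in> ker_linform k a"
  using assms linform_fun_upd[of t k a b "- linform k a (b(t := 0)) / a t"]
  by (auto simp: ker_linform_def vecs_def)

lemma ker_linform_notin_arrangement_two_free:
  fixes a b :: "nat \<Rightarrow> 'a::{field,finite}"
  assumes tu: "t < k" "u < k" "t \<noteq> u" and a: "a t \<noteq> 0" "a u \<noteq> 0"
    and two: "(2::'a) \<noteq> 0"
    and b: "b \<in> vecs k" "\<forall>i<h. i \<noteq> t \<and> i \<noteq> u \<longrightarrow> b i \<in> V"
    and V: "finite V" "V \<inter> uminus ` V = {}"
    and nondeg: "a t = a u \<Longrightarrow> linform k a (b(t := 0, u := 0)) \<noteq> 0"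
    and card: "2 * card V + (if a t = a u then 2 else 3) < CARD('a)"
  shows "\<exists>x \<in> ker_linform k a. x \<notin> arrangement h"
proof -
  define L where "L = linform k a (b(t := 0, u := 0))"
  define N where "N = insert 0 (uminus ` V)"
  \<comment> \<open>b(t := z y, u := y) lies in the kernel, and it avoids the arrangement
    as soon as y \<notin> N, z y \<notin> N and z y \<noteq> - y\<close>
  define z where "z y = - (L + a u * y) / a t" for y
  define z_inv where "z_inv c = - (L + a t * c) / a u" for c
  have z_eq_iff: "z y = c \<longleftrightarrow> y = z_inv c" for y c
    using a by (auto simp: z_def z_inv_def field_simps)
  have z_eq_neg: "a t \<noteq> a u \<and> y = L / (a t - a u)" if "z y = - y" for y
  proof -
    have "(a t - a u) * y = L"
      using a(1) that by (simp add: z_def field_simps)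
    then show ?thesis
      using nondeg by (auto simp: L_def eq_divide_eq mult.commute)
  qed
  define Z where "Z = (if a t = a u then {} else {L / (a t - a u)})"
  define E where "E = N \<union> z_inv ` N \<union> Z"
  have "card E \<le> card N + card (z_inv ` N) + card Z"
    unfolding E_def by (meson card_Un_le add_right_mono order_trans)
  also have "\<dots> \<le> 2 * card V + (if a t = a u then 2 else 3)"
  proof -
    have "card N \<le> card V + 1"
      using card_image_le[OF V(1), of uminus] by (simp add: N_def card_insert_if V(1))
    moreover have "card (z_inv ` N) \<le> card N"
      using V(1) unfolding N_def by (intro card_image_le) simp
    ultimately show ?thesis
      by (simp add: Z_def)
  qed
  finally have "E \<noteq> UNIV"
    using card by auto
  then obtain y where "y \<notin> E"
    by blast
  then have y: "y \<notin> N" "z y \<notin> N" "z y \<noteq> - y"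
    using z_eq_iff z_eq_neg by (auto simp: E_def Z_def)
  define x where "x = b(t := z y, u := y)"
  have "linform k a x = linform k a (b(u := 0, t := 0)) + a t * z y + a u * y"
    using tu linform_fun_upd[of u k a "b(t := z y)" y] linform_fun_upd[of t k a "b(u := 0)" "z y"]
    by (simp add: x_def fun_upd_twist)
  also have "\<dots> = 0"
    using a tu by (simp add: z_def L_def fun_upd_twist)
  finally have "x \<in> ker_linform k a"
    using b(1) tu by (auto simp: x_def ker_linform_def vecs_def)
  moreover have "\<forall>i<h. x i \<in> insert (z y) (insert y V)"
    using b(2) by (simp add: x_def)
  moreover have "insert (z y) (insert y V) \<inter> uminus ` insert (z y) (insert y V) = {}"
    using y V(2) two by (auto simp: insert_disjoint_uminus_iff N_def minus_equation_iff mult_2[symmetric]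
        intro: rev_image_eqI[of "- _" _ _ uminus])
  ultimately show ?thesis
    using notin_arrangement_if_values by blast
qed

definition arrangement_hyperplane :: "nat \<Rightarrow> nat \<Rightarrow> (nat \<Rightarrow> 'a::comm_ring_1) set \<Rightarrow> bool" where
  "arrangement_hyperplane k h H \<longleftrightarrow>
     (\<exists>i j. i < j \<and> j < h \<and> H = {x \<in> vecs k. x i + x j = 0}) \<or> (\<exists>i<h. H = {x \<in> vecs k. x i = 0})"

lemma arrangement_hyperplane_subset:
  "arrangement_hyperplane k h H \<Longrightarrow> H \<subseteq> arrangement h"
  by (auto simp: arrangement_hyperplane_def arrangement_def)

lemma vecs_not_arrangement_hyperplane:
  assumes "h \<le> k"
  shows "\<not> arrangement_hyperplane k h (vecs k :: (nat \<Rightarrow> 'a::comm_ring_1) set)"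
proof
  have unit: "(\<lambda>_. 0)(i := 1) \<in> (vecs k :: (nat \<Rightarrow> 'a) set)" if "i < h" for i
    using that assms by (auto simp: vecs_def)
  assume "arrangement_hyperplane k h (vecs k :: (nat \<Rightarrow> 'a) set)"
  then consider (pair) i j where "i < j" "j < h" "vecs k = {x \<in> vecs k. x i + x j = (0::'a)}"
    | (single) i where "i < h" "vecs k = {x \<in> vecs k. x i = (0::'a)}"
    unfolding arrangement_hyperplane_def by blast
  then show False
  proof cases
    case pair
    then have "((\<lambda>_. 0)(i := 1)) i + ((\<lambda>_. 0)(i := 1)) j = (0::'a)"
      using unit[of i] by (metis (mono_tags, lifting) mem_Collect_eq order.strict_trans)
    then show False
      using pair by simp
  next
    case single
    then have "((\<lambda>_. 0)(i := 1)) i = (0::'a)"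
      using unit[of i] by (metis (mono_tags, lifting) mem_Collect_eq)
    then show False
      by simp
  qed
qed

definition ones_vec :: "nat \<Rightarrow> nat \<Rightarrow> 'a::zero_neq_one" where
  "ones_vec k i = (if i < k then 1 else 0)"

lemma ones_vec_mem_vecs: "ones_vec k \<in> vecs k"
  by (simp add: ones_vec_def vecs_def)

lemma one_disjoint_uminus: "(2::'a::ring_1) \<noteq> 0 \<Longrightarrow> {1::'a} \<inter> uminus ` {1} = {}"
  using insert_disjoint_uminus_iff[of "1::'a" "{}"] by simp

lemma ker_linform_notin_arrangement_outside:
  fixes a :: "nat \<Rightarrow> 'a::field"
  assumes "h \<le> t" "t < k" "a t \<noteq> 0" "(2::'a) \<noteq> 0"
  shows "\<exists>x \<in> ker_linform k a. x \<notin> arrangement h"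
proof -
  define x :: "nat \<Rightarrow> 'a" where "x = (ones_vec k)(t := - linform k a ((ones_vec k)(t := 0)) / a t)"
  have "x \<in> ker_linform k a"
    unfolding x_def using assms ones_vec_mem_vecs by (intro fun_upd_solve_mem_ker_linform)
  moreover have "x \<notin> arrangement h"
    using assms one_disjoint_uminus
    by (intro notin_arrangement_if_values[where V = "{1}"]) (auto simp: x_def ones_vec_def)
  ultimately show ?thesis by blast
qed

lemma ker_linform_notin_arrangement_ones:
  fixes a :: "nat \<Rightarrow> 'a::{field,finite}"
  assumes "5 < CARD('a)" "(2::'a) \<noteq> 0" "h \<le> k"
    and "t < k" "u < k" "t \<noteq> u" "a t \<noteq> 0" "a u \<noteq> 0"
    and "a t = a u \<Longrightarrow> linform k a ((ones_vec k)(t := 0, u := 0)) \<noteq> 0"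
  shows "\<exists>x \<in> ker_linform k a. x \<notin> arrangement h"
proof (rule ker_linform_notin_arrangement_two_free[where b = "ones_vec k" and V = "{1}"])
  show "\<forall>i<h. i \<noteq> t \<and> i \<noteq> u \<longrightarrow> ones_vec k i \<in> {1::'a}"
    using assms(3) by (simp add: ones_vec_def)
  show "2 * card {1::'a} + (if a t = a u then 2 else 3) < CARD('a)"
    using assms(1) by simp
qed (use assms ones_vec_mem_vecs one_disjoint_uminus in auto)

lemma ker_linform_notin_arrangement_three:
  fixes a :: "nat \<Rightarrow> 'a::{field,finite}"
  assumes q: "7 \<le> CARD('a)" and two: "(2::'a) \<noteq> 0" and hk: "h \<le> k"
    and idx: "t < k" "u < k" "w < k" "t \<noteq> u" "w \<noteq> t" "w \<noteq> u"
    and a: "a t = a u" "a t \<noteq> 0" "a w \<noteq> 0"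
  shows "\<exists>x \<in> ker_linform k a. x \<notin> arrangement h"
proof -
  define L where "L = linform k a ((ones_vec k)(t := 0, u := 0))"
  show ?thesis
  proof (cases "L = 0")
    case False
    then show ?thesis
      using q two hk idx a
      by (intro ker_linform_notin_arrangement_ones[where t = t and u = u]) (auto simp: L_def)
  next
    case True
    have "card {0, 1, -1 :: 'a} < CARD('a)"
      using q card_length[of "[0, 1, -1 :: 'a]"] by simp
    then have "{0, 1, -1 :: 'a} \<noteq> UNIV"
      by (metis less_irrefl)
    then obtain d :: 'a where d: "d \<notin> {0, 1, -1}"
      by blast
    define b where "b = (ones_vec k)(w := d)"
    \<comment> \<open>moving coordinate w away from 1 breaks the cancellation L = 0\<close>
    have "linform k a (b(t := 0, u := 0)) = L - a w + a w * d"
    proof -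
      have w_one: "(ones_vec k)(t := 0, u := 0, w := 1) = (ones_vec k)(t := 0, u := 0)"
        using idx by (auto simp: ones_vec_def)
      show ?thesis
        using idx linform_fun_upd[of w k a "(ones_vec k)(t := 0, u := 0)" d]
          linform_fun_upd[of w k a "(ones_vec k)(t := 0, u := 0)" 1, unfolded w_one]
        by (simp add: b_def L_def fun_upd_twist)
    qed
    also have "\<dots> = a w * (d - 1)"
      using True by (simp add: algebra_simps)
    finally have nondeg: "linform k a (b(t := 0, u := 0)) \<noteq> 0"
      using a d by simp
    have "{1, d} \<inter> uminus ` {1, d} = {}"
      using one_disjoint_uminus[OF two] d two
      by (auto simp: insert_disjoint_uminus_iff mult_2[symmetric] minus_equation_iff)
    moreover have "b \<in> vecs k" "\<forall>i<h. i \<noteq> t \<and> i \<noteq> u \<longrightarrow> b i \<in> {1, d}"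
      using hk idx by (auto simp: b_def ones_vec_def vecs_def)
    moreover have "2 * card {1, d} + 2 < CARD('a)"
      using q card_length[of "[1, d]"] by simp
    ultimately show ?thesis
      using idx a two nondeg
      by (intro ker_linform_notin_arrangement_two_free[where b = b and V = "{1, d}"]) auto
  qed
qed

lemma ker_linform_notin_arrangement:
  fixes a :: "nat \<Rightarrow> 'a::{field,finite}"
  assumes q: "7 \<le> CARD('a)" and two: "(2::'a) \<noteq> 0" and hk: "h \<le> k"
    and a: "a \<in> vecs k" "a \<noteq> (\<lambda>_. 0)"
    and not_hyp: "\<not> arrangement_hyperplane k h (ker_linform k a)"
  shows "\<exists>x \<in> ker_linform k a. x \<notin> arrangement h"
proof (cases "\<exists>t. h \<le> t \<and> a t \<noteq> 0")
  case True
  then obtain t where "h \<le> t" "a t \<noteq> 0" by blast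
  moreover have "t < k"
    using a(1) \<open>a t \<noteq> 0\<close> by (auto simp: vecs_def not_less[symmetric])
  ultimately show ?thesis
    using two ker_linform_notin_arrangement_outside by blast
next
  case False
  then have supp: "i < h" if "a i \<noteq> 0" for i
    using that not_le by blast
  obtain t where t: "a t \<noteq> 0" "t < h"
    using a(2) supp by fastforce
  have "\<exists>u. u \<noteq> t \<and> a u \<noteq> 0"
  proof (rule ccontr)
    assume "\<nexists>u. u \<noteq> t \<and> a u \<noteq> 0"
    then have "linform k a x = a t * x t" for x
      using t hk by (subst linform_eq_sum_over[where S = "{t}"]) auto
    then have "ker_linform k a = {x \<in> vecs k. x t = 0}"
      using t by (auto simp: ker_linform_def)
    then show False
      using not_hyp t by (auto simp: arrangement_hyperplane_def)
  qed
  then obtain u where u: "u \<noteq> t" "a u \<noteq> 0" "u < h"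
    using supp by blast
  show ?thesis
  proof (cases "a t = a u")
    case False
    then show ?thesis
      using q two hk t u by (intro ker_linform_notin_arrangement_ones[where t = t and u = u]) auto
  next
    case True
    have "\<exists>w. w \<noteq> t \<and> w \<noteq> u \<and> a w \<noteq> 0"
    proof (rule ccontr)
      assume "\<nexists>w. w \<noteq> t \<and> w \<noteq> u \<and> a w \<noteq> 0"
      then have "linform k a x = a t * (x t + x u)" for x
        using t u hk True by (subst linform_eq_sum_over[where S = "{t, u}"]) (auto simp: algebra_simps)
      then have "ker_linform k a = {x \<in> vecs k. x t + x u = 0}"
            and "ker_linform k a = {x \<in> vecs k. x u + x t = 0}"
        using t by (auto simp: ker_linform_def add.commute)
      moreover have "t < u \<or> u < t"
        using u(1) by arith
      ultimately have "arrangement_hyperplane k h (ker_linform k a)"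
        using t(2) u(3) unfolding arrangement_hyperplane_def by blast
      then show False
        using not_hyp by blast
    qed
    then obtain w where "w \<noteq> t" "w \<noteq> u" "a w \<noteq> 0" "w < h"
      using supp by blast
    then show ?thesis
      using ker_linform_notin_arrangement_three[OF q two hk, of t u w a] True t u hk by simp
  qed
qed

lemma ker_linform_subset_arrangement_iff:
  fixes a :: "nat \<Rightarrow> 'a::{field,finite}"
  assumes "7 \<le> CARD('a)" "(2::'a) \<noteq> 0" "h \<le> k" "a \<in> vecs k" "a \<noteq> (\<lambda>_. 0)"
  shows "ker_linform k a \<subseteq> arrangement h \<longleftrightarrow> arrangement_hyperplane k h (ker_linform k a)"
  using assms arrangement_hyperplane_subset ker_linform_notin_arrangement by blast

lemma cw_weight_D3_nonzero_form:
  fixes a :: "nat \<Rightarrow> 'a::{field,finite}"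
  assumes "7 \<le> CARD('a)" "(2::'a) \<noteq> 0" "0 < h" "h \<le> k" "a \<in> vecs k" "a \<noteq> (\<lambda>_. 0)"
  defines "m \<equiv> int (card (D3 k h :: (nat \<Rightarrow> 'a) set)) - int CARD('a) ^ (k - 1) + 1"
  shows "m \<le> int (cw_weight (linform k a) (D3 k h))"
    and "int (cw_weight (linform k a) (D3 k h)) = m \<longleftrightarrow> arrangement_hyperplane k h (ker_linform k a)"
proof -
  obtain t where "t < k" "a t \<noteq> 0"
    using assms(5,6) by (auto simp: vecs_def fun_eq_iff not_less[symmetric])
  then have card_ker: "int (card (ker_linform k a)) = int CARD('a) ^ (k - 1)"
    by (simp add: card_ker_linform)
  have fin: "finite (ker_linform k a)"
    by (auto simp: ker_linform_def intro: finite_subset[OF _ finite_vecs])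
  have "card (ker_linform k a \<inter> arrangement h) \<le> card (ker_linform k a)"
    using fin by (intro card_mono) auto
  moreover have "card (ker_linform k a \<inter> arrangement h) = card (ker_linform k a) \<longleftrightarrow>
                 ker_linform k a \<subseteq> arrangement h"
    using fin card_subset_eq[of "ker_linform k a" "ker_linform k a \<inter> arrangement h"]
    by (auto simp: Int_absorb2)
  ultimately show "m \<le> int (cw_weight (linform k a) (D3 k h))"
    and "int (cw_weight (linform k a) (D3 k h)) = m \<longleftrightarrow> arrangement_hyperplane k h (ker_linform k a)"
    using cw_weight_D3[OF assms(3), of k a] card_ker ker_linform_subset_arrangement_iff[OF assms(1,2,4-6)]
    unfolding m_def by linarith+
qed

lemma exists_arrangement_hyperplane_nonzero_weight:
  assumes "1 < h" "h \<le> k"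
  shows "\<exists>a \<in> vecs k. arrangement_hyperplane k h (ker_linform k a) \<and>
           cw_weight (linform k a) (D3 k h :: (nat \<Rightarrow> 'a::{field,finite}) set) \<noteq> 0"
proof
  define e :: "nat \<Rightarrow> 'a" where "e = (\<lambda>_. 0)(0 := 1)"
  show "e \<in> vecs k"
    using assms by (auto simp: e_def vecs_def)
  have lin: "linform k e x = x 0" for x
    using assms by (subst linform_eq_sum_over[where S = "{0}"]) (auto simp: e_def)
  then have "ker_linform k e = {x \<in> vecs k. x 0 = 0}"
    by (simp add: ker_linform_def)
  then have "arrangement_hyperplane k h (ker_linform k e)"
    using assms unfolding arrangement_hyperplane_def by (metis gr_implies_not0 neq0_conv)
  moreover have "e \<in> D3 k h"
    using assms \<open>e \<in> vecs k\<close>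
    by (auto simp: D3_eq_arrangement arrangement_def e_def fun_eq_iff intro!: exI[of _ 1])
  then have "e \<in> {P \<in> D3 k h. linform k e P \<noteq> 0}"
    using lin by (simp add: e_def)
  moreover have "finite {P \<in> D3 k h. linform k e P \<noteq> 0}"
    by (rule finite_subset[OF _ finite_vecs]) (auto simp: D3_def)
  ultimately show "arrangement_hyperplane k h (ker_linform k e) \<and> cw_weight (linform k e) (D3 k h) \<noteq> 0"
    by (auto simp: cw_weight_def card_eq_0_iff)
qed

theorem proposition4p2:
  fixes p m k h :: nat
  assumes "prime p" and "odd p" and "card (UNIV :: 'a set) = p ^ m"
    and "card (UNIV :: 'a set) > 5"
    and "3 \<le> h" and "h \<le> k"
  shows "Min {int (cw_weight (linform k a) (D3 k h :: (nat \<Rightarrow> 'a::{field,finite}) set)) | a.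
              a \<in> vecs k \<and> cw_weight (linform k a) (D3 k h :: (nat \<Rightarrow> 'a::{field,finite}) set) \<noteq> 0}
           = int (card (D3 k h :: (nat \<Rightarrow> 'a::{field,finite}) set)) - int (card (UNIV :: 'a set)) ^ (k - 1) + 1
       \<and> (\<forall>a \<in> (vecs k :: (nat \<Rightarrow> 'a) set).
            int (cw_weight (linform k a) (D3 k h :: (nat \<Rightarrow> 'a::{field,finite}) set))
              = int (card (D3 k h :: (nat \<Rightarrow> 'a::{field,finite}) set)) - int (card (UNIV :: 'a set)) ^ (k - 1) + 1
            \<longleftrightarrow>
            ((\<exists>i j. i < j \<and> j < h \<and>
                {x \<in> vecs k. linform k a x = 0} = {x \<in> vecs k. x i + x j = 0})
             \<or> (\<exists>i < h. {x \<in> vecs k. linform k a x = 0} = {x \<in> vecs k. x i = 0})))"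
proof -
  have "odd CARD('a)"
    using assms(2,3) by simp
  then have two: "(2::'a) \<noteq> 0"
    by (rule two_neq_zero_if_odd_card)
  have q: "7 \<le> CARD('a)"
    using \<open>odd CARD('a)\<close> assms(4) by presburger
  define m where "m = int (card (D3 k h :: (nat \<Rightarrow> 'a) set)) - int CARD('a) ^ (k - 1) + 1"
  define w where "w a = int (cw_weight (linform k a) (D3 k h :: (nat \<Rightarrow> 'a) set))" for a
  have nonzero: "m \<le> w a" "w a = m \<longleftrightarrow> arrangement_hyperplane k h (ker_linform k a)"
    if "a \<in> vecs k" "a \<noteq> (\<lambda>_. 0)" for a
    using cw_weight_D3_nonzero_form[OF q two _ assms(6) that] assms(5) unfolding m_def w_def by auto
  have zero: "w (\<lambda>_. 0) = 0" "\<not> arrangement_hyperplane k h (ker_linform k (\<lambda>_. 0 :: 'a))"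
    using vecs_not_arrangement_hyperplane[OF assms(6)]
    by (simp_all add: w_def cw_weight_def linform_def ker_linform_def)
  obtain e where e: "e \<in> vecs k" "arrangement_hyperplane k h (ker_linform k e)" "w e \<noteq> 0"
    using exists_arrangement_hyperplane_nonzero_weight[of h k] assms(5,6) unfolding w_def by auto
  then have "w e = m"
    using nonzero zero by blast
  have "Min {w a | a. a \<in> vecs k \<and> w a \<noteq> 0} = m"
    by (rule Min_eqI) (use e \<open>w e = m\<close> nonzero zero in \<open>fastforce intro: finite_subset[of _ "w ` vecs k"]\<close>)+
  moreover have "w a = m \<longleftrightarrow> arrangement_hyperplane k h (ker_linform k a)" if "a \<in> vecs k" for a
    using nonzero[OF that] zero e \<open>w e = m\<close> by (cases "a = (\<lambda>_. 0)") auto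
  ultimately show ?thesis
    unfolding w_def m_def arrangement_hyperplane_def ker_linform_def by auto
qed

end
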